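(* Let $G=K_{n_1,n_2,\dots,n_k}$ be a complete $k$-partite graph with $n_i\geq 1$ for all $i$. Then $\eta(G)$ equals $k$ plus the maximum size of a matching in the complete multipartite graph $K_{n_1-1,n_2-1,\dots,n_k-1}$.
   Context: All graphs are finite, simple and undirected. $K_{n_1,\dots,n_k}$ is the graph whose vertex set is partitioned into $k$ classes of sizes $n_1,\dots,n_k$ (classes may be empty), with two vertices adjacent if and only if they lie in different classes. A graph $H$ is a minor of $G$ if $H$ can be obtained from a subgraph of $G$ by contracting edges. The Hadwiger number $\eta(G)$ is the largest $t$ such that the complete graph $K_t$ is a minor of $G$. A matching is a set of pairwise disjoint edges. *)

theory Defs
  imports Main
begin

type_synonym 'a graph = "'a set \<times> 'a set set"

definition graph :: "'a graph \<Rightarrow> bool" where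
  "graph G \<longleftrightarrow> finite (fst G) \<and> (\<forall>e\<in>snd G. e \<subseteq> fst G \<and> card e = 2)"

definition subgraph :: "'a graph \<Rightarrow> 'a graph \<Rightarrow> bool" where
  "subgraph H G \<longleftrightarrow> fst H \<subseteq> fst G \<and> snd H \<subseteq> snd G \<and> (\<forall>e\<in>snd H. e \<subseteq> fst H)"

definition contract :: "'a graph \<Rightarrow> 'a \<Rightarrow> 'a \<Rightarrow> 'a graph" where
  "contract G u v = (fst G - {v},
     {e\<in>snd G. v \<notin> e} \<union> {{u, w} | w. {v, w} \<in> snd G \<and> w \<noteq> u})"

inductive contracts_to :: "'a graph \<Rightarrow> 'a graph \<Rightarrow> bool" where
  refl: "contracts_to G G"
| step: "contracts_to G H \<Longrightarrow> {u, v} \<in> snd H \<Longrightarrow> u \<noteq> v \<Longrightarrow> contracts_to G (contract H u v)"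

definition graph_iso :: "'a graph \<Rightarrow> 'b graph \<Rightarrow> bool" where
  "graph_iso G H \<longleftrightarrow> (\<exists>f. bij_betw f (fst G) (fst H) \<and>
     (\<forall>x\<in>fst G. \<forall>y\<in>fst G. {x, y} \<in> snd G \<longleftrightarrow> {f x, f y} \<in> snd H))"

definition minor :: "'b graph \<Rightarrow> 'a graph \<Rightarrow> bool" where
  "minor H G \<longleftrightarrow> (\<exists>S M. subgraph S G \<and> contracts_to S M \<and> graph_iso M H)"

definition complete_graph :: "nat \<Rightarrow> nat graph" where
  "complete_graph t = ({..<t}, {{i, j} | i j. i < t \<and> j < t \<and> i \<noteq> j})"

definition hadwiger :: "'a graph \<Rightarrow> nat" where
  "hadwiger G = Max {t. minor (complete_graph t) G}"

definition matching :: "'a graph \<Rightarrow> 'a set set \<Rightarrow> bool" where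
  "matching G M \<longleftrightarrow> M \<subseteq> snd G \<and> (\<forall>e\<in>M. \<forall>f\<in>M. e \<noteq> f \<longrightarrow> e \<inter> f = {})"

definition matching_number :: "'a graph \<Rightarrow> nat" where
  "matching_number G = Max {card M | M. matching G M}"

text \<open>Complete multipartite graph K_{n_0,...,n_{k-1}}: vertex (i,j) is the j-th vertex of
  class i (i < k, j < n i); two vertices are adjacent iff they lie in different classes.\<close>
definition complete_multipartite :: "nat \<Rightarrow> (nat \<Rightarrow> nat) \<Rightarrow> (nat \<times> nat) graph" where
  "complete_multipartite k n =
     ({(i, j). i < k \<and> j < n i},
      {{(i, j), (i', j')} | i j i' j'. i < k \<and> j < n i \<and> i' < k \<and> j' < n i' \<and> i \<noteq> i'})"

end

theory Submission
  imports Defs "HOL-Combinatorics.Transposition"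
begin

text \<open>Upper bound: every K_t minor of G = K_{n_1,...,n_k} has a model by t disjoint, pairwise
  touching branch sets, each a single vertex or containing an edge. The singleton branch sets S
  lie in pairwise different classes, and an edge chosen inside every other branch set gives a
  matching M of G avoiding S, with |S| + |M| = t. Extend S to a transversal R, one vertex per
  class. Relabelling each class so that its vertex in R becomes its last vertex, the edges of M
  missing R form a matching of K_{n_1-1,...,n_k-1}, and each of the k - |S| vertices of R - S
  lies on at most one edge of M. Hence t is at most k plus the matching number.

  Lower bound: shift a maximum matching of K_{n_1-1,...,n_k-1} off the transversal of vertices
  (i, 0). Those k vertices and the matching edges pairwise touch in G, so contracting the
  matching edges leaves a complete graph.\<close>

lemma graph_subgraph:
  assumes "graph G" "subgraph S G"
  shows "graph S"
  using assms unfolding graph_def subgraph_def by (auto intro: finite_subset)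

lemma graph_contract:
  assumes "graph H" "{u, v} \<in> snd H" "u \<noteq> v"
  shows "graph (contract H u v)"
proof -
  have "w \<in> fst H - {v}" if "{v, w} \<in> snd H" for w
    using that assms(1) unfolding graph_def by (auto simp: card_2_iff doubleton_eq_iff)
  moreover have "u \<in> fst H" using assms unfolding graph_def by auto
  ultimately show ?thesis
    using assms unfolding graph_def contract_def by auto
qed

lemma graph_contracts_to:
  assumes "contracts_to S M" "graph S"
  shows "graph M"
  using assms by induction (auto intro: graph_contract)

lemma finite_edges:
  assumes "graph G"
  shows "finite (snd G)"
proof -
  have "snd G \<subseteq> Pow (fst G)" using assms unfolding graph_def by auto
  then show ?thesis using assms unfolding graph_def by (meson finite_Pow_iff finite_subset)
qed

lemma complete_graph_edge_iff: "{a, b} \<in> snd (complete_graph t) \<longleftrightarrow> a < t \<and> b < t \<and> a \<noteq> b"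
  unfolding complete_graph_def by (auto simp: doubleton_eq_iff)

lemma matching_subset: "matching G M \<Longrightarrow> N \<subseteq> M \<Longrightarrow> matching G N"
  unfolding matching_def by blast

definition touches :: "'a graph \<Rightarrow> 'a set \<Rightarrow> 'a set \<Rightarrow> bool" where
  "touches G A B \<longleftrightarrow> (\<exists>a\<in>A. \<exists>b\<in>B. {a, b} \<in> snd G)"

lemma touches_sym: "touches G A B \<longleftrightarrow> touches G B A"
  unfolding touches_def by (metis insert_commute)

lemma touches_mono: "touches G A B \<Longrightarrow> A \<subseteq> A' \<Longrightarrow> B \<subseteq> B' \<Longrightarrow> touches G A' B'"
  unfolding touches_def by blast

lemma touches_Un: "touches G (A \<union> B) C \<longleftrightarrow> touches G A C \<or> touches G B C"
  unfolding touches_def by blast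

lemma touches_singleton [simp]: "touches G {a} {b} \<longleftrightarrow> {a, b} \<in> snd G"
  unfolding touches_def by simp

section \<open>Branch sets of a contraction\<close>

text \<open>Connectivity of a branch set is weakened to: a singleton, or containing an edge. This
  survives contraction and is all that the upper bound needs.\<close>

definition branch_sets :: "'a graph \<Rightarrow> 'b set \<Rightarrow> ('b \<Rightarrow> 'a set) \<Rightarrow> bool" where
  "branch_sets G X \<beta> \<longleftrightarrow> pairwise (\<lambda>x y. disjnt (\<beta> x) (\<beta> y)) X \<and>
     (\<forall>x\<in>X. \<beta> x \<noteq> {} \<and> \<beta> x \<subseteq> fst G \<and>
        (is_singleton (\<beta> x) \<or> (\<exists>e\<in>snd G. e \<subseteq> \<beta> x)))"

lemma branch_sets_disjoint:
  "branch_sets G X \<beta> \<Longrightarrow> x \<in> X \<Longrightarrow> y \<in> X \<Longrightarrow> x \<noteq> y \<Longrightarrow> \<beta> x \<inter> \<beta> y = {}"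
  unfolding branch_sets_def pairwise_def disjnt_def by blast

lemma branch_sets_subset: "branch_sets G X \<beta> \<Longrightarrow> Y \<subseteq> X \<Longrightarrow> branch_sets G Y \<beta>"
  unfolding branch_sets_def by (blast intro: pairwise_subset)

lemma branch_sets_contract:
  assumes bs: "branch_sets G (fst H) \<beta>"
    and adj: "\<forall>x y. {x, y} \<in> snd H \<longrightarrow> touches G (\<beta> x) (\<beta> y)"
    and H: "graph H" and uv: "{u, v} \<in> snd H"
  defines "\<beta>' \<equiv> \<beta>(u := \<beta> u \<union> \<beta> v)"
  shows "branch_sets G (fst (contract H u v)) \<beta>'"
    and "\<forall>x y. {x, y} \<in> snd (contract H u v) \<longrightarrow> touches G (\<beta>' x) (\<beta>' y)"
proof -
  have V: "fst (contract H u v) = fst H - {v}" by (simp add: contract_def)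
  have "u \<in> fst H" "v \<in> fst H" using H uv unfolding graph_def by auto
  have grow: "\<beta> x \<subseteq> \<beta>' x" for x unfolding \<beta>'_def by auto
  obtain a b where "a \<in> \<beta> u" "b \<in> \<beta> v" "{a, b} \<in> snd G"
    using adj uv unfolding touches_def by blast
  then have "\<exists>e\<in>snd G. e \<subseteq> \<beta>' u" by (intro bexI[of _ "{a, b}"]) (auto simp: \<beta>'_def)
  moreover have "\<beta>' u \<noteq> {} \<and> \<beta>' u \<subseteq> fst G"
    using bs \<open>u \<in> fst H\<close> \<open>v \<in> fst H\<close> unfolding branch_sets_def \<beta>'_def by auto
  moreover have "disjnt (\<beta>' x) (\<beta>' y)" if "x \<in> fst H - {v}" "y \<in> fst H - {v}" "x \<noteq> y" for x y
  proof -
    have "disjnt (\<beta>' u) (\<beta> z)" if "z \<in> fst H - {u, v}" for z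
      using branch_sets_disjoint[OF bs] that \<open>u \<in> fst H\<close> \<open>v \<in> fst H\<close>
      unfolding \<beta>'_def by (auto simp: disjnt_def)
    then show ?thesis
      using branch_sets_disjoint[OF bs] that unfolding \<beta>'_def
      by (cases "x = u"; cases "y = u") (auto simp: disjnt_def)
  qed
  ultimately show "branch_sets G (fst (contract H u v)) \<beta>'"
    using bs unfolding branch_sets_def V pairwise_def \<beta>'_def by auto
  show "\<forall>x y. {x, y} \<in> snd (contract H u v) \<longrightarrow> touches G (\<beta>' x) (\<beta>' y)"
  proof (intro allI impI)
    fix x y assume "{x, y} \<in> snd (contract H u v)"
    then consider "{x, y} \<in> snd H" | w where "{x, y} = {u, w}" "{v, w} \<in> snd H"
      unfolding contract_def by auto
    then show "touches G (\<beta>' x) (\<beta>' y)"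
    proof cases
      case 1
      then show ?thesis using adj grow by (blast intro: touches_mono)
    next
      case 2
      then have "touches G (\<beta>' u) (\<beta>' w)"
        using adj grow unfolding \<beta>'_def by (auto intro: touches_mono)
      then show ?thesis using 2(1) touches_sym[of G "\<beta>' u"] by (auto simp: doubleton_eq_iff)
    qed
  qed
qed

lemma contracts_to_branch_sets:
  assumes "contracts_to S M" "subgraph S G" "graph G"
  shows "\<exists>\<beta>. branch_sets G (fst M) \<beta> \<and> (\<forall>x y. {x, y} \<in> snd M \<longrightarrow> touches G (\<beta> x) (\<beta> y))"
  using assms(1,2)
proof induction
  case (refl S)
  have "branch_sets G (fst S) (\<lambda>x. {x})"
    using refl unfolding branch_sets_def subgraph_def pairwise_def by auto
  moreover have "\<forall>x y. {x, y} \<in> snd S \<longrightarrow> touches G {x} {y}"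
    using refl unfolding subgraph_def by auto
  ultimately show ?case by blast
next
  case (step S H u v)
  have "graph H" using graph_contracts_to[OF step.hyps(1) graph_subgraph[OF assms(3) step.prems]] .
  then show ?case using step branch_sets_contract[OF _ _ _ step.hyps(2)] by blast
qed

lemma minor_complete_graph_branch_sets:
  fixes G :: "'a graph"
  assumes G: "graph G" and "minor (complete_graph t) G"
  obtains X :: "'a set" and \<beta> where "finite X" "card X = t" "branch_sets G X \<beta>"
    "pairwise (\<lambda>x y. touches G (\<beta> x) (\<beta> y)) X"
proof -
  obtain S M f where S: "subgraph S G" and SM: "contracts_to S M"
    and f: "bij_betw f (fst M) {..<t}"
    and iso: "\<forall>x\<in>fst M. \<forall>y\<in>fst M. {x, y} \<in> snd M \<longleftrightarrow> {f x, f y} \<in> snd (complete_graph t)"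
    using assms(2) unfolding minor_def graph_iso_def complete_graph_def by auto
  obtain \<beta> where \<beta>: "branch_sets G (fst M) \<beta>"
    and adj: "\<forall>x y. {x, y} \<in> snd M \<longrightarrow> touches G (\<beta> x) (\<beta> y)"
    using contracts_to_branch_sets[OF SM S G] by blast
  have "{x, y} \<in> snd M" if "x \<in> fst M" "y \<in> fst M" "x \<noteq> y" for x y
    using iso that f unfolding bij_betw_def inj_on_def complete_graph_edge_iff by auto
  then have "pairwise (\<lambda>x y. touches G (\<beta> x) (\<beta> y)) (fst M)"
    using adj unfolding pairwise_def by blast
  moreover have "finite (fst M)" "card (fst M) = t"
    using bij_betw_finite[OF f] bij_betw_same_card[OF f] by auto
  ultimately show ?thesis using that \<beta> by blast
qed

lemma singleton_branch_sets_clique: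
  assumes X: "finite X" and bs: "branch_sets G X \<beta>" and sing: "\<forall>x\<in>X. is_singleton (\<beta> x)"
    and adj: "pairwise (\<lambda>x y. touches G (\<beta> x) (\<beta> y)) X"
  shows "card (\<Union>(\<beta> ` X)) = card X" "pairwise (\<lambda>a b. {a, b} \<in> snd G) (\<Union>(\<beta> ` X))"
proof -
  have one: "card (\<beta> x) = 1" if "x \<in> X" for x using sing that is_singleton_altdef by blast
  have "card (\<Union>(\<beta> ` X)) = (\<Sum>x\<in>X. card (\<beta> x))"
    using X branch_sets_disjoint[OF bs] one by (intro card_UN_disjoint) (auto intro: card_ge_0_finite)
  then show "card (\<Union>(\<beta> ` X)) = card X" using one by simp
  have "{a, b} \<in> snd G" if "x \<in> X" "y \<in> X" "a \<in> \<beta> x" "b \<in> \<beta> y" "a \<noteq> b" for x y a b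
  proof -
    have "\<beta> x = {a}" "\<beta> y = {b}" using sing that by (auto simp: is_singleton_def)
    then have "x \<noteq> y" using \<open>a \<noteq> b\<close> by auto
    then have "touches G (\<beta> x) (\<beta> y)" using adj that unfolding pairwise_def by blast
    then show ?thesis using \<open>\<beta> x = {a}\<close> \<open>\<beta> y = {b}\<close> by simp
  qed
  then show "pairwise (\<lambda>a b. {a, b} \<in> snd G) (\<Union>(\<beta> ` X))" unfolding pairwise_def by blast
qed

lemma branch_sets_edges_matching:
  assumes G: "graph G" and bs: "branch_sets G X \<beta>" and edge: "\<forall>x\<in>X. \<exists>e\<in>snd G. e \<subseteq> \<beta> x"
  obtains M where "matching G M" "card M = card X" "\<Union>M \<subseteq> \<Union>(\<beta> ` X)"
proof -
  obtain e where e: "e x \<in> snd G" "e x \<subseteq> \<beta> x" if "x \<in> X" for x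
    using edge by metis
  have e_ne: "e x \<noteq> {}" if "x \<in> X" for x
    using G e(1)[OF that] unfolding graph_def by fastforce
  have "inj_on e X"
  proof (rule inj_onI)
    fix x y assume "x \<in> X" "y \<in> X" "e x = e y"
    then have "e x \<subseteq> \<beta> x \<inter> \<beta> y" using e(2) by (metis Int_subset_iff)
    then show "x = y"
      using branch_sets_disjoint[OF bs] e_ne[OF \<open>x \<in> X\<close>] \<open>x \<in> X\<close> \<open>y \<in> X\<close> by blast
  qed
  moreover have "e x \<inter> e y = {}" if "x \<in> X" "y \<in> X" "e x \<noteq> e y" for x y
  proof -
    have "x \<noteq> y" using that(3) by auto
    then show ?thesis using e(2) that branch_sets_disjoint[OF bs] by blast
  qed
  then have "matching G (e ` X)" using e(1) unfolding matching_def by blast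
  moreover have "\<Union>(e ` X) \<subseteq> \<Union>(\<beta> ` X)" using e(2) by blast
  ultimately show ?thesis using that card_image by blast
qed

lemma branch_sets_split:
  assumes G: "graph G" and X: "finite X" and bs: "branch_sets G X \<beta>"
    and adj: "pairwise (\<lambda>x y. touches G (\<beta> x) (\<beta> y)) X"
  obtains S M where "S \<subseteq> fst G" "pairwise (\<lambda>a b. {a, b} \<in> snd G) S" "matching G M"
    "S \<inter> \<Union>M = {}" "card S + card M = card X"
proof -
  define X1 where "X1 = {x\<in>X. is_singleton (\<beta> x)}"
  have "X1 \<subseteq> X" "X - X1 \<subseteq> X" unfolding X1_def by auto
  define S where "S = \<Union>(\<beta> ` X1)"
  have "finite X1" "\<forall>x\<in>X1. is_singleton (\<beta> x)"
    using X \<open>X1 \<subseteq> X\<close> finite_subset unfolding X1_def by blast+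
  from singleton_branch_sets_clique[OF this(1) branch_sets_subset[OF bs \<open>X1 \<subseteq> X\<close>] this(2)
      pairwise_subset[OF adj \<open>X1 \<subseteq> X\<close>]]
  have S: "card S = card X1" "pairwise (\<lambda>a b. {a, b} \<in> snd G) S" unfolding S_def .
  have "\<forall>x\<in>X - X1. \<exists>e\<in>snd G. e \<subseteq> \<beta> x" using bs unfolding branch_sets_def X1_def by blast
  then obtain M where M: "matching G M" "card M = card (X - X1)" "\<Union>M \<subseteq> \<Union>(\<beta> ` (X - X1))"
    using branch_sets_edges_matching[OF G branch_sets_subset[OF bs \<open>X - X1 \<subseteq> X\<close>]] by blast
  have "S \<subseteq> fst G" using bs \<open>X1 \<subseteq> X\<close> unfolding S_def branch_sets_def by blast
  moreover have "\<beta> x \<inter> \<beta> y = {}" if "x \<in> X1" "y \<in> X - X1" for x y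
    using branch_sets_disjoint[OF bs] that \<open>X1 \<subseteq> X\<close> by blast
  then have "S \<inter> \<Union>M = {}" using M(3) unfolding S_def by blast
  moreover have "card S + card M = card X"
    using S(1) M(2) X \<open>X1 \<subseteq> X\<close> by (simp add: card_Diff_subset card_mono finite_subset)
  ultimately show ?thesis using that S(2) M(1) by blast
qed

section \<open>Contracting a matching\<close>

text \<open>G with each branch set \<beta> x contracted to the vertex x.\<close>

definition touch_graph :: "'a graph \<Rightarrow> 'b set \<Rightarrow> ('b \<Rightarrow> 'a set) \<Rightarrow> 'b graph" where
  "touch_graph G W \<beta> = (W, {{x, y} | x y. x \<in> W \<and> y \<in> W \<and> x \<noteq> y \<and> touches G (\<beta> x) (\<beta> y)})"

lemma touch_graph_edge_iff:
  "{x, y} \<in> snd (touch_graph G W \<beta>) \<longleftrightarrow> x \<in> W \<and> y \<in> W \<and> x \<noteq> y \<and> touches G (\<beta> x) (\<beta> y)"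
  unfolding touch_graph_def by (auto simp: doubleton_eq_iff touches_sym)

lemma contract_touch_graph_edges_subset:
  assumes "u \<in> W" "v \<in> W" "u \<noteq> v"
  shows "snd (contract (touch_graph G W \<beta>) u v) \<subseteq>
    snd (touch_graph G (W - {v}) (\<beta>(u := \<beta> u \<union> \<beta> v)))"
    (is "_ \<subseteq> snd (touch_graph G ?W ?\<beta>)")
proof
  fix e assume "e \<in> snd (contract (touch_graph G W \<beta>) u v)"
  then consider "e \<in> snd (touch_graph G W \<beta>)" "v \<notin> e"
    | w where "e = {u, w}" "{v, w} \<in> snd (touch_graph G W \<beta>)" "w \<noteq> u"
    unfolding contract_def by auto
  then show "e \<in> snd (touch_graph G ?W ?\<beta>)"
  proof cases
    case 1
    then obtain x y where xy: "e = {x, y}" "x \<in> ?W" "y \<in> ?W" "x \<noteq> y" "touches G (\<beta> x) (\<beta> y)"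
      unfolding touch_graph_def by auto
    have "touches G (?\<beta> x) (?\<beta> y)" using xy(5) by (rule touches_mono) auto
    then show ?thesis using xy by (simp add: touch_graph_edge_iff)
  next
    case 2
    then have w: "w \<in> ?W" "touches G (\<beta> v) (\<beta> w)"
      unfolding touch_graph_edge_iff by auto
    have "touches G (?\<beta> u) (?\<beta> w)" using w(2) by (rule touches_mono) (use 2 in auto)
    then show ?thesis using 2 w assms by (simp add: touch_graph_edge_iff)
  qed
qed

lemma contract_touch_graph_edges_supset:
  assumes "u \<in> W" "v \<in> W" "u \<noteq> v"
  shows "snd (touch_graph G (W - {v}) (\<beta>(u := \<beta> u \<union> \<beta> v))) \<subseteq>
    snd (contract (touch_graph G W \<beta>) u v)"
    (is "snd (touch_graph G ?W ?\<beta>) \<subseteq> snd (contract ?H u v)")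
proof -
  have edge: "{x, y} \<in> snd (contract ?H u v)"
    if "x \<in> ?W" "y \<in> ?W" "x \<noteq> y" "touches G (?\<beta> x) (?\<beta> y)" "y \<noteq> u" for x y
  proof (cases "x = u")
    case True
    then have "touches G (\<beta> u) (\<beta> y) \<or> touches G (\<beta> v) (\<beta> y)"
      using that(4,5) by (simp add: touches_Un)
    then show ?thesis
    proof
      assume "touches G (\<beta> u) (\<beta> y)"
      then have "{x, y} \<in> snd ?H" "v \<notin> {x, y}" using True that assms by (auto simp: touch_graph_edge_iff)
      then show ?thesis unfolding contract_def by simp
    next
      assume "touches G (\<beta> v) (\<beta> y)"
      then have "{v, y} \<in> snd ?H" using that assms by (auto simp: touch_graph_edge_iff)
      then show ?thesis using True that(5) unfolding contract_def by auto
    qed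
  next
    case False
    then have "{x, y} \<in> snd ?H" "v \<notin> {x, y}" using that by (auto simp: touch_graph_edge_iff)
    then show ?thesis unfolding contract_def by simp
  qed
  show ?thesis
  proof
    fix e assume "e \<in> snd (touch_graph G ?W ?\<beta>)"
    then obtain x y where e: "e = {x, y}" "x \<in> ?W" "y \<in> ?W" "x \<noteq> y" "touches G (?\<beta> x) (?\<beta> y)"
      unfolding touch_graph_def by auto
    show "e \<in> snd (contract ?H u v)"
    proof (cases "y = u")
      case True
      have "{y, x} \<in> snd (contract ?H u v)"
        using e True by (intro edge) (auto simp: touches_sym)
      then show ?thesis using e(1) by (simp add: insert_commute)
    next
      case False
      then show ?thesis using e edge by blast
    qed
  qed
qed

lemma contract_touch_graph:
  assumes "u \<in> W" "v \<in> W" "u \<noteq> v"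
  shows "contract (touch_graph G W \<beta>) u v = touch_graph G (W - {v}) (\<beta>(u := \<beta> u \<union> \<beta> v))"
proof (rule prod_eqI)
  show "snd (contract (touch_graph G W \<beta>) u v) = snd (touch_graph G (W - {v}) (\<beta>(u := \<beta> u \<union> \<beta> v)))"
    using contract_touch_graph_edges_subset[OF assms] contract_touch_graph_edges_supset[OF assms]
    by (rule equalityI)
qed (simp add: contract_def touch_graph_def)

lemma subgraph_touch_graph_singletons:
  assumes "U \<subseteq> fst G"
  shows "subgraph (touch_graph G U (\<lambda>x. {x})) G"
  using assms unfolding subgraph_def touch_graph_def by auto

lemma bij_betw_fun_upd_merge:
  assumes "bij_betw \<beta> W B" "x \<in> W" "y \<in> W" "x \<noteq> y" "e \<notin> B"
  shows "bij_betw (\<beta>(x := e)) (W - {y}) (insert e (B - {\<beta> x, \<beta> y}))"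
proof -
  have "\<beta> ` (W - {x, y}) = B - {\<beta> x, \<beta> y}"
    using assms(1-3) unfolding bij_betw_def by (subst inj_on_image_set_diff) auto
  then have "bij_betw \<beta> (W - {x, y}) (B - {\<beta> x, \<beta> y})"
    using assms(1) by (rule bij_betw_subset[rotated 2]) blast
  then have "bij_betw (\<beta>(x := e)) (W - {x, y}) (B - {\<beta> x, \<beta> y})"
    by (rule bij_betw_cong[THEN iffD1, rotated]) auto
  then have "bij_betw (\<beta>(x := e)) (W - {x, y} \<union> {x}) (B - {\<beta> x, \<beta> y} \<union> {e})"
    using notIn_Un_bij_betw[of x "W - {x, y}" "\<beta>(x := e)"] assms(5) by simp
  moreover have "W - {x, y} \<union> {x} = W - {y}" using assms(2,4) by auto
  ultimately show ?thesis by simp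
qed

lemma contracts_to_merge_singletons:
  assumes S: "contracts_to S (touch_graph G W \<beta>)" and \<beta>: "bij_betw \<beta> W B"
    and uv: "{u} \<in> B" "{v} \<in> B" "{u, v} \<in> snd G" "u \<noteq> v" "{u, v} \<notin> B"
  shows "\<exists>W' \<beta>'. contracts_to S (touch_graph G W' \<beta>') \<and> bij_betw \<beta>' W' (insert {u, v} (B - {{u}, {v}}))"
proof -
  define x where "x = inv_into W \<beta> {u}"
  define y where "y = inv_into W \<beta> {v}"
  have xy: "x \<in> W" "\<beta> x = {u}" "y \<in> W" "\<beta> y = {v}"
    using \<beta> uv(1,2) unfolding x_def y_def by (auto simp: bij_betw_def inv_into_into f_inv_into_f)
  then have "x \<noteq> y" using uv(4) by auto
  have "{x, y} \<in> snd (touch_graph G W \<beta>)"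
    using xy \<open>x \<noteq> y\<close> uv(3) by (simp add: touch_graph_edge_iff)
  moreover have "contract (touch_graph G W \<beta>) x y = touch_graph G (W - {y}) (\<beta>(x := {u, v}))"
    using contract_touch_graph[OF xy(1,3) \<open>x \<noteq> y\<close>, of G \<beta>] xy by (simp add: insert_commute)
  ultimately have "contracts_to S (touch_graph G (W - {y}) (\<beta>(x := {u, v})))"
    using contracts_to.step[OF S _ \<open>x \<noteq> y\<close>] by metis
  moreover have "bij_betw (\<beta>(x := {u, v})) (W - {y}) (insert {u, v} (B - {{u}, {v}}))"
    using bij_betw_fun_upd_merge[OF \<beta> xy(1,3) \<open>x \<noteq> y\<close> uv(5)] xy by simp
  ultimately show ?thesis by blast
qed

lemma contracts_to_matching:
  assumes G: "graph G" and "finite M" "matching G M" "\<Union>M \<subseteq> U"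
  shows "\<exists>W \<beta>. contracts_to (touch_graph G U (\<lambda>x. {x})) (touch_graph G W \<beta>) \<and>
           bij_betw \<beta> W ((\<lambda>x. {x}) ` (U - \<Union>M) \<union> M)"
  using assms(2-4)
proof (induction M rule: finite_induct)
  case empty
  show ?case
    by (intro exI[of _ U] exI[of _ "\<lambda>x. {x}"]) (simp add: contracts_to.refl bij_betw_def)
next
  case (insert e M)
  let ?B = "(\<lambda>x. {x}) ` (U - \<Union>M) \<union> M"
  have "matching G M" using insert.prems(1) by (rule matching_subset) blast
  then obtain W \<beta> where W: "contracts_to (touch_graph G U (\<lambda>x. {x})) (touch_graph G W \<beta>)"
    and \<beta>: "bij_betw \<beta> W ?B"
    using insert by auto
  have "e \<in> snd G" using insert.prems(1) unfolding matching_def by blast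
  then have "card e = 2" using G unfolding graph_def by blast
  then obtain u v where e: "e = {u, v}" "u \<noteq> v" by (meson card_2_iff)
  have "card f = 2" if "f \<in> M" for f
    using G \<open>matching G M\<close> that unfolding graph_def matching_def by blast
  then have "{u} \<notin> M" "{v} \<notin> M" by force+
  have "e \<inter> f = {}" if "f \<in> M" for f
    using insert.prems(1) insert.hyps(2) that unfolding matching_def by (metis insertCI)
  then have "u \<in> U - \<Union>M" "v \<in> U - \<Union>M" using insert.prems(2) e by auto
  moreover have "e \<notin> ?B" using insert.hyps(2) e by (auto simp: doubleton_eq_iff)
  ultimately obtain W' \<beta>' where "contracts_to (touch_graph G U (\<lambda>x. {x})) (touch_graph G W' \<beta>')"
    and "bij_betw \<beta>' W' (insert e (?B - {{u}, {v}}))"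
    using contracts_to_merge_singletons[OF W \<beta>, of u v] e \<open>e \<in> snd G\<close> by auto
  moreover have "insert e (?B - {{u}, {v}}) = (\<lambda>x. {x}) ` (U - \<Union>(insert e M)) \<union> insert e M"
    using e \<open>{u} \<notin> M\<close> \<open>{v} \<notin> M\<close> by auto
  ultimately show ?case by auto
qed

lemma graph_iso_touch_graph_complete_graph:
  assumes "finite W" "inj_on \<beta> W" "pairwise (touches G) (\<beta> ` W)"
  shows "graph_iso (touch_graph G W \<beta>) (complete_graph (card W))"
proof -
  obtain g where g: "bij_betw g W {0..<card W}" using ex_bij_betw_finite_nat[OF assms(1)] by blast
  have "{x, y} \<in> snd (touch_graph G W \<beta>) \<longleftrightarrow> {g x, g y} \<in> snd (complete_graph (card W))"
    if "x \<in> W" "y \<in> W" for x y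
  proof -
    have "x \<noteq> y \<longrightarrow> touches G (\<beta> x) (\<beta> y)"
      using assms(2,3) that unfolding pairwise_def inj_on_def by blast
    moreover have "g x = g y \<longleftrightarrow> x = y" "g x < card W" "g y < card W"
      using g that unfolding bij_betw_def inj_on_def by auto
    ultimately show ?thesis using that by (auto simp: touch_graph_edge_iff complete_graph_edge_iff)
  qed
  moreover have "bij_betw g (fst (touch_graph G W \<beta>)) (fst (complete_graph (card W)))"
    using g by (simp add: touch_graph_def complete_graph_def atLeast0LessThan)
  ultimately show ?thesis unfolding graph_iso_def by (auto simp: touch_graph_def)
qed

lemma minor_complete_graph_of_matching:
  assumes G: "graph G" and M: "matching G M" and T: "T \<subseteq> fst G" "T \<inter> \<Union>M = {}"
    and touch: "pairwise (touches G) ((\<lambda>t. {t}) ` T \<union> M)"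
  shows "minor (complete_graph (card T + card M)) G"
proof -
  let ?B = "(\<lambda>t. {t}) ` T \<union> M"
  have "M \<subseteq> snd G" using M unfolding matching_def by blast
  then have "finite M" "\<Union>M \<subseteq> fst G" using G finite_edges finite_subset unfolding graph_def by blast+
  have "finite T" using G T(1) finite_subset unfolding graph_def by blast
  define U where "U = T \<union> \<Union>M"
  have "U - \<Union>M = T" using T(2) unfolding U_def by blast
  then obtain W \<beta> where W: "contracts_to (touch_graph G U (\<lambda>x. {x})) (touch_graph G W \<beta>)"
    and \<beta>: "bij_betw \<beta> W ?B"
    using contracts_to_matching[OF G \<open>finite M\<close> M, of U] unfolding U_def by auto
  have "card e = 2" if "e \<in> M" for e using G \<open>M \<subseteq> snd G\<close> that unfolding graph_def by blast
  then have "(\<lambda>t. {t}) ` T \<inter> M = {}" by force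
  then have "card ?B = card T + card M"
    using \<open>finite T\<close> \<open>finite M\<close> by (simp add: card_Un_disjoint card_image)
  moreover have "finite W" using \<beta> \<open>finite T\<close> \<open>finite M\<close> bij_betw_finite by blast
  ultimately have "graph_iso (touch_graph G W \<beta>) (complete_graph (card T + card M))"
    using graph_iso_touch_graph_complete_graph[of W \<beta> G] \<beta> touch
    by (metis bij_betw_def bij_betw_same_card)
  moreover have "subgraph (touch_graph G U (\<lambda>x. {x})) G"
    using T(1) \<open>\<Union>M \<subseteq> fst G\<close> unfolding U_def by (intro subgraph_touch_graph_singletons) blast
  ultimately show ?thesis unfolding minor_def using W by blast
qed

section \<open>Matchings\<close>

lemma finite_matching_cards:
  assumes "finite (snd G)"
  shows "finite {card M | M. matching G M}"
proof -
  have "{card M | M. matching G M} \<subseteq> card ` Pow (snd G)" unfolding matching_def by blast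
  then show ?thesis using assms by (simp add: finite_subset)
qed

lemma card_le_matching_number:
  assumes "finite (snd G)" "matching G M"
  shows "card M \<le> matching_number G"
  unfolding matching_number_def using finite_matching_cards[OF assms(1)] assms(2) by (intro Max_ge) auto

lemma matching_number_attained:
  assumes "finite (snd G)"
  obtains M where "matching G M" "card M = matching_number G"
proof -
  have "matching G {}" unfolding matching_def by simp
  then have "{card M | M. matching G M} \<noteq> {}" by blast
  from Max_in[OF finite_matching_cards[OF assms] this] show ?thesis
    using that unfolding matching_number_def by auto
qed

lemma matching_image:
  assumes "matching G M" "inj \<phi>" "\<And>e. e \<in> M \<Longrightarrow> \<phi> ` e \<in> snd H"
  shows "matching H (image \<phi> ` M)" "card (image \<phi> ` M) = card M"
proof -
  have "inj_on (image \<phi>) M" using assms(2) by (simp add: inj_on_def inj_image_eq_iff)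
  then show "card (image \<phi> ` M) = card M" by (rule card_image)
  show "matching H (image \<phi> ` M)"
    using assms unfolding matching_def by (auto simp: image_Int[symmetric] inj_image_eq_iff)
qed

lemma card_matching_edges_meeting_le:
  assumes "matching G M" "finite R"
  shows "card {e \<in> M. e \<inter> R \<noteq> {}} \<le> card (R \<inter> \<Union>M)"
proof -
  define c where "c e = (SOME a. a \<in> e \<inter> R)" for e :: "'a set"
  have c: "c e \<in> e \<inter> R" if "e \<inter> R \<noteq> {}" for e
    unfolding c_def using that by (metis some_in_eq)
  have "inj_on c {e \<in> M. e \<inter> R \<noteq> {}}"
  proof (rule inj_onI)
    fix e f assume e: "e \<in> {e \<in> M. e \<inter> R \<noteq> {}}" and f: "f \<in> {e \<in> M. e \<inter> R \<noteq> {}}" and "c e = c f"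
    then have "c e \<in> e \<inter> f" using c[of e] c[of f] by auto
    then show "e = f" using assms(1) e f unfolding matching_def by blast
  qed
  moreover have "c ` {e \<in> M. e \<inter> R \<noteq> {}} \<subseteq> R \<inter> \<Union>M" using c by blast
  ultimately show ?thesis using assms(2) by (intro card_inj_on_le) auto
qed

section \<open>Complete multipartite graphs\<close>

lemma complete_multipartite_vertex_iff [simp]:
  "(i, j) \<in> fst (complete_multipartite k n) \<longleftrightarrow> i < k \<and> j < n i"
  by (simp add: complete_multipartite_def)

lemma complete_multipartite_doubleton_edge_iff:
  "{a, b} \<in> snd (complete_multipartite k n) \<longleftrightarrow>
     a \<in> fst (complete_multipartite k n) \<and> b \<in> fst (complete_multipartite k n) \<and> fst a \<noteq> fst b"
  by (cases a; cases b) (auto simp: complete_multipartite_def doubleton_eq_iff)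

lemma complete_multipartite_edge_iff:
  "e \<in> snd (complete_multipartite k n) \<longleftrightarrow>
     (\<exists>a b. e = {a, b} \<and> a \<in> fst (complete_multipartite k n) \<and>
        b \<in> fst (complete_multipartite k n) \<and> fst a \<noteq> fst b)"
  (is "_ \<longleftrightarrow> ?edge")
proof
  assume e: "e \<in> snd (complete_multipartite k n)"
  then obtain a b where "e = {a, b}" unfolding complete_multipartite_def by auto
  with e show ?edge using complete_multipartite_doubleton_edge_iff by blast
qed (auto simp: complete_multipartite_doubleton_edge_iff)

lemma graph_complete_multipartite: "graph (complete_multipartite k n)"
proof -
  have "fst (complete_multipartite k n) = Sigma {..<k} (\<lambda>i. {..<n i})"
    by (auto simp: complete_multipartite_def)
  moreover have "e \<subseteq> fst (complete_multipartite k n) \<and> card e = 2"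
    if e: "e \<in> snd (complete_multipartite k n)" for e
  proof -
    obtain a b where "e = {a, b}" "a \<in> fst (complete_multipartite k n)"
      "b \<in> fst (complete_multipartite k n)" "fst a \<noteq> fst b"
      using e unfolding complete_multipartite_edge_iff by blast
    moreover have "a \<noteq> b" using calculation(4) by auto
    ultimately show ?thesis by simp
  qed
  ultimately show ?thesis unfolding graph_def by simp
qed

lemma transpose_last_less:
  fixes j r m :: nat
  assumes "j < m" "r < m" "j \<noteq> r"
  shows "transpose r (m - 1) j < m - 1"
  using assms by (auto simp: transpose_def)

lemma matching_avoiding_transversal_le:
  assumes r: "\<forall>i<k. r i < n i" and M: "matching (complete_multipartite k n) M"
    and avoid: "\<forall>e\<in>M. e \<inter> (\<lambda>i. (i, r i)) ` {..<k} = {}"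
  shows "card M \<le> matching_number (complete_multipartite k (\<lambda>i. n i - 1))"
proof -
  let ?G = "complete_multipartite k n" and ?H = "complete_multipartite k (\<lambda>i. n i - 1)"
  (* Swapping r i with the last vertex n i - 1 of class i maps the vertices off the
     transversal into the classes of size n i - 1. *)
  define \<phi> where "\<phi> a = (fst a, transpose (r (fst a)) (n (fst a) - 1) (snd a))" for a :: "nat \<times> nat"
  have "inj \<phi>" unfolding \<phi>_def inj_def by (auto simp: transpose_eq_iff)
  have \<phi>_vertex: "\<phi> a \<in> fst ?H \<and> fst (\<phi> a) = fst a" if "a \<in> fst ?G" "a \<notin> (\<lambda>i. (i, r i)) ` {..<k}" for a
  proof -
    obtain i j where "a = (i, j)" by fastforce
    moreover have "i < k" "j < n i" using that(1) calculation by auto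
    moreover have "j \<noteq> r i" using that(2) calculation by auto
    ultimately show ?thesis using r transpose_last_less[of j "n i" "r i"] by (simp add: \<phi>_def)
  qed
  have "\<phi> ` e \<in> snd ?H" if "e \<in> M" for e
  proof -
    have "e \<in> snd ?G" using M that unfolding matching_def by blast
    then obtain a b where ab: "e = {a, b}" "a \<in> fst ?G" "b \<in> fst ?G" "fst a \<noteq> fst b"
      unfolding complete_multipartite_edge_iff by blast
    moreover have "e \<inter> (\<lambda>i. (i, r i)) ` {..<k} = {}" using avoid that by blast
    then have "a \<notin> (\<lambda>i. (i, r i)) ` {..<k}" "b \<notin> (\<lambda>i. (i, r i)) ` {..<k}"
      using ab(1) by auto
    ultimately show ?thesis
      using \<phi>_vertex[of a] \<phi>_vertex[of b] by (simp add: complete_multipartite_doubleton_edge_iff)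
  qed
  then have "matching ?H (image \<phi> ` M)" "card (image \<phi> ` M) = card M"
    using matching_image[OF M \<open>inj \<phi>\<close>] by blast+
  then show ?thesis
    using card_le_matching_number[OF finite_edges[OF graph_complete_multipartite]] by metis
qed

lemma partial_transversal_extend:
  assumes n: "\<forall>i<k. n i \<ge> 1" and S: "S \<subseteq> fst (complete_multipartite k n)" "inj_on fst S"
  obtains r where "\<forall>i<k. r i < n i" "S \<subseteq> (\<lambda>i. (i, r i)) ` {..<k}"
proof -
  define r where "r i = (if i \<in> fst ` S then snd (the_inv_into S fst i) else 0)" for i
  have r_S: "a = (fst a, r (fst a))" if "a \<in> S" for a
    using S(2) that by (simp add: r_def the_inv_into_f_f)
  then have "S \<subseteq> (\<lambda>i. (i, r i)) ` {..<k}"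
    using S(1) by (auto simp: complete_multipartite_def)
  moreover have "r i < n i" if "i < k" for i
  proof (cases "i \<in> fst ` S")
    case True
    then obtain a where "a \<in> S" "fst a = i" by blast
    then show ?thesis using S(1) r_S[OF \<open>a \<in> S\<close>] that
      by (metis complete_multipartite_vertex_iff subsetD)
  next
    case False
    have "n i \<ge> 1" using n that by blast
    then show ?thesis using False by (simp add: r_def)
  qed
  ultimately show ?thesis using that by blast
qed

lemma matching_partial_transversal_card_le:
  assumes n: "\<forall>i<k. n i \<ge> 1" and M: "matching (complete_multipartite k n) M"
    and S: "S \<subseteq> fst (complete_multipartite k n)" "inj_on fst S" "S \<inter> \<Union>M = {}"
  shows "card S + card M \<le> k + matching_number (complete_multipartite k (\<lambda>i. n i - 1))"
proof -
  obtain r where r: "\<forall>i<k. r i < n i" and SR: "S \<subseteq> (\<lambda>i. (i, r i)) ` {..<k}"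
    using partial_transversal_extend[OF n S(1,2)] by blast
  define R where "R = (\<lambda>i. (i, r i)) ` {..<k}"
  have "inj_on (\<lambda>i. (i, r i)) {..<k}" by (rule inj_onI) simp
  then have "card R = k" unfolding R_def by (simp add: card_image)
  have "M \<subseteq> snd (complete_multipartite k n)" using M unfolding matching_def by blast
  then have "finite M" using finite_edges[OF graph_complete_multipartite] by (rule finite_subset)
  define hit where "hit = {e \<in> M. e \<inter> R \<noteq> {}}"
  have "matching (complete_multipartite k n) (M - hit)" using M by (rule matching_subset) blast
  moreover have "\<forall>e\<in>M - hit. e \<inter> (\<lambda>i. (i, r i)) ` {..<k} = {}" unfolding hit_def R_def by blast
  ultimately have avoiding: "card (M - hit) \<le> matching_number (complete_multipartite k (\<lambda>i. n i - 1))"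
    using matching_avoiding_transversal_le[OF r] by blast
  have "finite R" "S \<subseteq> R" using SR unfolding R_def by simp_all
  have "card hit \<le> card (R \<inter> \<Union>M)"
    unfolding hit_def using M \<open>finite R\<close> by (rule card_matching_edges_meeting_le)
  also have "\<dots> \<le> card (R - S)"
    using S(3) \<open>finite R\<close> by (intro card_mono) blast+
  also have "\<dots> = k - card S"
    using \<open>S \<subseteq> R\<close> \<open>finite R\<close> \<open>card R = k\<close> by (simp add: card_Diff_subset finite_subset)
  finally have "card hit \<le> k - card S" .
  moreover have "card S \<le> k" using \<open>S \<subseteq> R\<close> \<open>finite R\<close> \<open>card R = k\<close> card_mono by blast
  moreover have "hit \<subseteq> M" unfolding hit_def by blast
  then have "card (M - hit) = card M - card hit" "card hit \<le> card M"
    using \<open>finite M\<close> by (simp_all add: card_Diff_subset card_mono finite_subset)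
  ultimately show ?thesis using avoiding by linarith
qed

lemma complete_multipartite_minor_le:
  assumes n: "\<forall>i<k. n i \<ge> 1" and minor: "minor (complete_graph t) (complete_multipartite k n)"
  shows "t \<le> k + matching_number (complete_multipartite k (\<lambda>i. n i - 1))"
proof -
  let ?G = "complete_multipartite k n"
  obtain X :: "(nat \<times> nat) set" and \<beta> where "finite X" "card X = t" "branch_sets ?G X \<beta>"
    "pairwise (\<lambda>x y. touches ?G (\<beta> x) (\<beta> y)) X"
    using minor_complete_graph_branch_sets[OF graph_complete_multipartite minor] by blast
  then obtain S M where S: "S \<subseteq> fst ?G" "pairwise (\<lambda>a b. {a, b} \<in> snd ?G) S"
    and M: "matching ?G M" "S \<inter> \<Union>M = {}" "card S + card M = t"
    using branch_sets_split[OF graph_complete_multipartite] by metis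
  have "inj_on fst S"
    using S(2) unfolding pairwise_def inj_on_def complete_multipartite_doubleton_edge_iff by blast
  from matching_partial_transversal_card_le[OF n M(1) S(1) this M(2)] show ?thesis
    unfolding M(3) .
qed

lemma touches_complete_multipartite_edge:
  assumes "A \<subseteq> fst (complete_multipartite k n)" "A \<noteq> {}" "e \<in> snd (complete_multipartite k n)"
  shows "touches (complete_multipartite k n) A e"
proof -
  obtain a where "a \<in> A" using assms(2) by blast
  obtain c d where cd: "e = {c, d}" "c \<in> fst (complete_multipartite k n)"
    "d \<in> fst (complete_multipartite k n)" "fst c \<noteq> fst d"
    using assms(3) unfolding complete_multipartite_edge_iff by blast
  have "a \<in> fst (complete_multipartite k n)" using \<open>a \<in> A\<close> assms(1) by blast
  then have "{a, c} \<in> snd (complete_multipartite k n) \<or> {a, d} \<in> snd (complete_multipartite k n)"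
    using cd by (auto simp: complete_multipartite_doubleton_edge_iff)
  then show ?thesis using \<open>a \<in> A\<close> cd(1) unfolding touches_def by blast
qed

lemma pairwise_touches_transversal_matching:
  assumes T: "T \<subseteq> fst (complete_multipartite k n)" "inj_on fst T"
    and M: "matching (complete_multipartite k n) M"
  shows "pairwise (touches (complete_multipartite k n)) ((\<lambda>t. {t}) ` T \<union> M)"
proof (rule pairwiseI)
  let ?G = "complete_multipartite k n"
  have edges: "M \<subseteq> snd ?G" using M unfolding matching_def by blast
  have "e \<subseteq> fst ?G \<and> e \<noteq> {}" if "e \<in> snd ?G" for e
    using graph_complete_multipartite that unfolding graph_def by force
  then have family: "X \<subseteq> fst ?G \<and> X \<noteq> {}" if "X \<in> (\<lambda>t. {t}) ` T \<union> M" for X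
    using that T(1) edges by blast
  fix X Y assume X: "X \<in> (\<lambda>t. {t}) ` T \<union> M" and Y: "Y \<in> (\<lambda>t. {t}) ` T \<union> M" and "X \<noteq> Y"
  consider "Y \<in> M" | "X \<in> M" | a b where "X = {a}" "Y = {b}" "a \<in> T" "b \<in> T"
    using X Y by blast
  then show "touches ?G X Y"
  proof cases
    case 1
    then show ?thesis using family[OF X] edges by (blast intro: touches_complete_multipartite_edge)
  next
    case 2
    then show ?thesis using family[OF Y] edges touches_sym
      by (metis subsetD touches_complete_multipartite_edge)
  next
    case 3
    then have "fst a \<noteq> fst b" using \<open>X \<noteq> Y\<close> T(2) unfolding inj_on_def by blast
    then show ?thesis using 3 T(1) by (auto simp: complete_multipartite_doubleton_edge_iff)
  qed
qed

lemma complete_multipartite_minor: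
  assumes n: "\<forall>i<k. n i \<ge> 1"
  shows "minor (complete_graph (k + matching_number (complete_multipartite k (\<lambda>i. n i - 1))))
           (complete_multipartite k n)"
proof -
  let ?G = "complete_multipartite k n" and ?H = "complete_multipartite k (\<lambda>i. n i - 1)"
  obtain Ms where Ms: "matching ?H Ms" "card Ms = matching_number ?H"
    using matching_number_attained[OF finite_edges[OF graph_complete_multipartite]] by blast
  define s where "s a = (fst a, Suc (snd a))" for a :: "nat \<times> nat"
  have "inj s" unfolding s_def inj_def by auto
  have "s ` e \<in> snd ?G" if "e \<in> Ms" for e
  proof -
    have "e \<in> snd ?H" using Ms(1) that unfolding matching_def by blast
    then obtain a b where "e = {a, b}" "a \<in> fst ?H" "b \<in> fst ?H" "fst a \<noteq> fst b"
      unfolding complete_multipartite_edge_iff by blast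
    moreover have "s x \<in> fst ?G" if "x \<in> fst ?H" for x
      using that by (cases x) (auto simp: s_def)
    ultimately show ?thesis by (simp add: s_def complete_multipartite_doubleton_edge_iff)
  qed
  then have M: "matching ?G (image s ` Ms)" "card (image s ` Ms) = card Ms"
    using matching_image[OF Ms(1) \<open>inj s\<close>] by blast+
  define T where "T = (\<lambda>i. (i, 0::nat)) ` {..<k}"
  have "T \<subseteq> fst ?G" using n unfolding T_def by auto
  have "inj_on fst T" unfolding T_def by (auto intro: inj_onI)
  have "card T = k" unfolding T_def by (simp add: card_image inj_on_def)
  have "T \<inter> \<Union>(image s ` Ms) = {}" unfolding T_def s_def by auto
  from minor_complete_graph_of_matching[OF graph_complete_multipartite M(1) \<open>T \<subseteq> fst ?G\<close>
      \<open>T \<inter> \<Union>(image s ` Ms) = {}\<close>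
      pairwise_touches_transversal_matching[OF \<open>T \<subseteq> fst ?G\<close> \<open>inj_on fst T\<close> M(1)]]
  show ?thesis unfolding M(2) Ms(2) \<open>card T = k\<close> .
qed

theorem lemma4:
  fixes k :: nat and n :: "nat \<Rightarrow> nat"
  assumes "\<forall>i<k. n i \<ge> 1"
  shows "hadwiger (complete_multipartite k n)
           = k + matching_number (complete_multipartite k (\<lambda>i. n i - 1))"
proof -
  let ?m = "k + matching_number (complete_multipartite k (\<lambda>i. n i - 1))"
  let ?A = "{t. minor (complete_graph t) (complete_multipartite k n)}"
  have bound: "t \<le> ?m" if "t \<in> ?A" for t
    using complete_multipartite_minor_le[OF assms] that by blast
  then have "finite ?A" by (meson finite_atMost finite_subset atMost_iff subsetI)
  moreover have "?m \<in> ?A" using complete_multipartite_minor[OF assms] by simp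
  ultimately show ?thesis unfolding hadwiger_def using bound by (intro Max_eqI)
qed

end
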